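(* Fix $\tau\in\mathbb N$, $d\in(1,2]$, $m\in[1,\infty)$. Let $S=\{x_0,x_1,\dots,x_\tau\}$ (distinct points) with the metric $\rho(x,y)=1$ if $x\ne y$ and $x_0\in\{x,y\}$, $\rho(x,y)=d$ for distinct $x,y\in\{x_1,\dots,x_\tau\}$, and the measure $\mu(\{x_0\})=1$, $\mu(\{x_i\})=m$ for $i\in\{1,\dots,\tau\}$; let $\mathfrak S=(S,\rho,\mu)$. Then, with implicit constants independent of $\tau,d,m,\kappa$ (depending at most on $p$), $$\mathfrak c_{\mathfrak S}(\kappa,p)\simeq\mathfrak c^{\rm c}_{\mathfrak S}(\kappa,p)\simeq\begin{cases}\max\{1,\tau^{1/p}m^{1/p-1}\}& \kappa\in[1,d),\ p\in[1,\infty),\\ 1&\kappa\in[d,\infty)\text{ or }p=\infty.\end{cases}$$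
   Context: For $\kappa\ge1$: $\mathcal M^{\rm c}_{\kappa}f(x)=\sup_{s>0}\mu(B(x,\kappa s))^{-1}\int_{B(x,s)}|f|d\mu$ and $\mathcal M_\kappa f(x)=\sup\{\mu(B(y,\kappa s))^{-1}\int_{B(y,s)}|f|d\mu: y\in X, s>0, x\in B(y,s)\}$, where $B(y,s)$ are open balls. $\mathfrak c^{\rm c}_{\mathfrak X}(\kappa,p)$ (respectively $\mathfrak c_{\mathfrak X}(\kappa,p)$) is the best constant $C$ in $\sup_{\lambda>0}\lambda\mu(\{|Tf|>\lambda\})^{1/p}\le C\|f\|_p$ for $T=\mathcal M^{\rm c}_\kappa$ (respectively $T=\mathcal M_\kappa$), $p<\infty$, and the $L^\infty$ operator norm for $p=\infty$. *)

theory Defs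
  imports Complex_Main "HOL-Library.Extended_Real"
begin

definition fball :: "'a set \<Rightarrow> ('a \<Rightarrow> 'a \<Rightarrow> real) \<Rightarrow> 'a \<Rightarrow> real \<Rightarrow> 'a set" where
  "fball S \<rho> y s = {x \<in> S. \<rho> y x < s}"

definition fmeas :: "('a \<Rightarrow> real) \<Rightarrow> 'a set \<Rightarrow> real" where
  "fmeas w A = (\<Sum>x\<in>A. w x)"

definition ball_avg :: "'a set \<Rightarrow> ('a \<Rightarrow> 'a \<Rightarrow> real) \<Rightarrow> ('a \<Rightarrow> real) \<Rightarrow> real
    \<Rightarrow> ('a \<Rightarrow> real) \<Rightarrow> 'a \<Rightarrow> real \<Rightarrow> real" where
  "ball_avg S \<rho> w \<kappa> f y s =
     (\<Sum>z\<in>fball S \<rho> y s. \<bar>f z\<bar> * w z) / fmeas w (fball S \<rho> y (\<kappa> * s))"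

definition cmax :: "'a set \<Rightarrow> ('a \<Rightarrow> 'a \<Rightarrow> real) \<Rightarrow> ('a \<Rightarrow> real) \<Rightarrow> real
    \<Rightarrow> ('a \<Rightarrow> real) \<Rightarrow> 'a \<Rightarrow> real" where
  "cmax S \<rho> w \<kappa> f x = (SUP s\<in>{0<..}. ball_avg S \<rho> w \<kappa> f x s)"

definition umax :: "'a set \<Rightarrow> ('a \<Rightarrow> 'a \<Rightarrow> real) \<Rightarrow> ('a \<Rightarrow> real) \<Rightarrow> real
    \<Rightarrow> ('a \<Rightarrow> real) \<Rightarrow> 'a \<Rightarrow> real" where
  "umax S \<rho> w \<kappa> f x =
     Sup {ball_avg S \<rho> w \<kappa> f y s | y s. y \<in> S \<and> 0 < s \<and> x \<in> fball S \<rho> y s}"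

definition lp_norm :: "'a set \<Rightarrow> ('a \<Rightarrow> real) \<Rightarrow> real \<Rightarrow> ('a \<Rightarrow> real) \<Rightarrow> real" where
  "lp_norm S w p f = (\<Sum>x\<in>S. \<bar>f x\<bar> powr p * w x) powr (1 / p)"

text \<open>L-infinity norm (all points have positive mass, so ess sup = max).\<close>
definition linf_norm :: "'a set \<Rightarrow> ('a \<Rightarrow> real) \<Rightarrow> real" where
  "linf_norm S f = Max ((\<lambda>x. \<bar>f x\<bar>) ` S)"

definition weak_norm :: "'a set \<Rightarrow> ('a \<Rightarrow> real) \<Rightarrow> real \<Rightarrow> ('a \<Rightarrow> real) \<Rightarrow> real" where
  "weak_norm S w p g = (SUP t\<in>{0<..}. t * fmeas w {x \<in> S. \<bar>g x\<bar> > t} powr (1 / p))"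

definition best_const :: "'a set \<Rightarrow> ('a \<Rightarrow> real) \<Rightarrow> (('a \<Rightarrow> real) \<Rightarrow> 'a \<Rightarrow> real)
    \<Rightarrow> ereal \<Rightarrow> real" where
  "best_const S w T p =
     (if p = \<infinity> then Inf {C. 0 \<le> C \<and> (\<forall>f. linf_norm S (T f) \<le> C * linf_norm S f)}
      else Inf {C. 0 \<le> C \<and> (\<forall>f. weak_norm S w (real_of_ereal p) (T f)
                                  \<le> C * lp_norm S w (real_of_ereal p) f)})"

text \<open>The space: points 0..tau (x_0 = 0), metric and measure as in the paper.\<close>
definition Sdist :: "real \<Rightarrow> nat \<Rightarrow> nat \<Rightarrow> real" where
  "Sdist d x y = (if x = y then 0 else if x = 0 \<or> y = 0 then 1 else d)"

definition Smass :: "real \<Rightarrow> nat \<Rightarrow> real" where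
  "Smass m x = (if x = 0 then 1 else m)"

definition Sc :: "nat \<Rightarrow> real \<Rightarrow> real \<Rightarrow> real \<Rightarrow> ereal \<Rightarrow> real" where
  "Sc \<tau> d m \<kappa> p = best_const {0..\<tau>} (Smass m) (umax {0..\<tau>} (Sdist d) (Smass m) \<kappa>) p"

definition Scc :: "nat \<Rightarrow> real \<Rightarrow> real \<Rightarrow> real \<Rightarrow> ereal \<Rightarrow> real" where
  "Scc \<tau> d m \<kappa> p = best_const {0..\<tau>} (Smass m) (cmax {0..\<tau>} (Sdist d) (Smass m) \<kappa>) p"

definition Sbound :: "nat \<Rightarrow> real \<Rightarrow> real \<Rightarrow> real \<Rightarrow> ereal \<Rightarrow> real" where
  "Sbound \<tau> d m \<kappa> p =
     (if p = \<infinity> \<or> d \<le> \<kappa> then 1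
      else max 1 (real \<tau> powr (1 / real_of_ereal p) * m powr (1 / real_of_ereal p - 1)))"

end

theory Submission
  imports Defs "HOL-Library.Indicator_Function"
begin

text \<open>Every ball of the space is a singleton, the whole space, or a pair \<open>{x\<^sub>0, x\<^sub>i}\<close> (radius in
  \<open>(1, d]\<close>), and a pair is its own \<open>\<kappa>\<close>-dilate exactly when \<open>\<kappa> < d\<close>. Hence both maximal operators lie
  between the centred averages and the majorant
  \<open>|f x| + \<langle>|f|\<rangle> + [x = x\<^sub>0] \<parallel>f\<parallel>\<^sub>\<infinity> + [x \<noteq> x\<^sub>0, \<kappa> < d] |f x\<^sub>0|/(1 + m)\<close>.
  Chebyshev's inequality controls the level sets of the first three terms; the last one spreads the
  mass at \<open>x\<^sub>0\<close> over measure \<open>\<tau> m\<close> at height about \<open>|f x\<^sub>0|/m\<close>, which produces the factor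
  \<open>\<tau>^(1/p) m^(1/p - 1)\<close>. Testing with the indicator of \<open>x\<^sub>0\<close> shows that both bounds are attained.\<close>

lemma fmeas_nonneg: "(\<And>x. x \<in> A \<Longrightarrow> 0 \<le> w x) \<Longrightarrow> 0 \<le> fmeas w A"
  unfolding fmeas_def by (rule sum_nonneg)

lemma fmeas_mono:
  "finite B \<Longrightarrow> A \<subseteq> B \<Longrightarrow> (\<And>x. x \<in> B \<Longrightarrow> 0 \<le> w x) \<Longrightarrow> fmeas w A \<le> fmeas w B"
  unfolding fmeas_def by (rule sum_mono2) auto

lemma fmeas_Un_le:
  assumes "finite A" "finite B" "\<And>x. x \<in> A \<union> B \<Longrightarrow> 0 \<le> w x"
  shows "fmeas w (A \<union> B) \<le> fmeas w A + fmeas w B"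
proof -
  have "0 \<le> fmeas w (A \<inter> B)" using assms(3) by (intro fmeas_nonneg) auto
  then show ?thesis using sum_Un[OF assms(1,2), of w] by (simp add: fmeas_def)
qed

lemma fmeas_level_set_le:
  assumes "finite S" "\<And>x. x \<in> S \<Longrightarrow> 0 \<le> w x" "0 < c" "0 < r"
  shows "fmeas w {x\<in>S. c < \<bar>f x\<bar>} \<le> (1/c) powr r * (\<Sum>x\<in>S. \<bar>f x\<bar> powr r * w x)"
proof -
  have "w x \<le> (1/c) powr r * (\<bar>f x\<bar> powr r * w x)" if "x \<in> S" "c < \<bar>f x\<bar>" for x
  proof -
    have "1 \<le> (\<bar>f x\<bar> / c) powr r" using that assms by (intro ge_one_powr_ge_zero) auto
    then have "1 * w x \<le> (\<bar>f x\<bar> / c) powr r * w x" using that assms by (intro mult_right_mono) auto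
    then show ?thesis using assms by (simp add: powr_divide divide_simps)
  qed
  then have "fmeas w {x\<in>S. c < \<bar>f x\<bar>} \<le> (\<Sum>x\<in>{x\<in>S. c < \<bar>f x\<bar>}. (1/c) powr r * (\<bar>f x\<bar> powr r * w x))"
    unfolding fmeas_def by (intro sum_mono) auto
  also have "\<dots> \<le> (\<Sum>x\<in>S. (1/c) powr r * (\<bar>f x\<bar> powr r * w x))"
    using assms by (intro sum_mono2) auto
  finally show ?thesis by (simp add: sum_distrib_left)
qed

lemma le_add_powr:
  fixes c g r :: real
  assumes "0 < c" "1 \<le> r" "0 \<le> g"
  shows "g \<le> c + c powr (1 - r) * g powr r"
proof (cases "g \<le> c")
  case True
  then show ?thesis by (smt (verit) mult_nonneg_nonneg powr_ge_zero)
next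
  case False
  then have g: "0 < g" using assms by linarith
  have "c powr (r - 1) \<le> g powr (r - 1)" using False assms by (intro powr_mono2) auto
  then have "g * c powr (r - 1) \<le> g * g powr (r - 1)" using g by simp
  also have "\<dots> = g powr r" using g by (simp add: powr_mult_base)
  finally have "c powr (1 - r) * (g * c powr (r - 1)) \<le> c powr (1 - r) * g powr r"
    by (intro mult_left_mono) auto
  moreover have "c powr (1 - r) * (g * c powr (r - 1)) = g"
    using assms by (simp add: mult.left_commute flip: powr_add)
  ultimately show ?thesis using assms by linarith
qed

lemma fmeas_le_of_average_gt:
  assumes "finite S" "\<And>x. x \<in> S \<Longrightarrow> 0 \<le> w x" "1 \<le> r" "0 < c"
    and avg: "2 * c * fmeas w S < (\<Sum>x\<in>S. \<bar>f x\<bar> * w x)"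
  shows "fmeas w S \<le> (1/c) powr r * (\<Sum>x\<in>S. \<bar>f x\<bar> powr r * w x)"
proof -
  let ?N = "\<Sum>x\<in>S. \<bar>f x\<bar> powr r * w x"
  have "(\<Sum>x\<in>S. \<bar>f x\<bar> * w x) \<le> (\<Sum>x\<in>S. (c + c powr (1 - r) * \<bar>f x\<bar> powr r) * w x)"
    using assms by (intro sum_mono mult_right_mono le_add_powr) auto
  also have "\<dots> = c * fmeas w S + c powr (1 - r) * ?N"
    by (simp add: fmeas_def sum.distrib sum_distrib_left algebra_simps)
  finally have "c * fmeas w S < c powr (1 - r) * ?N" using avg by linarith
  also have "c powr (1 - r) = c * (1/c) powr r"
    using assms by (simp add: powr_diff powr_divide)
  finally show ?thesis using assms by simp
qed

lemma ball_avg_nonneg: "(\<And>x. x \<in> S \<Longrightarrow> 0 \<le> w x) \<Longrightarrow> 0 \<le> ball_avg S \<rho> w \<kappa> f y s"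
  unfolding ball_avg_def fmeas_def
  by (intro divide_nonneg_nonneg sum_nonneg mult_nonneg_nonneg) (auto simp: fball_def)

lemma linf_norm_ge: "finite S \<Longrightarrow> x \<in> S \<Longrightarrow> \<bar>f x\<bar> \<le> linf_norm S f"
  unfolding linf_norm_def by (rule Max_ge) auto

lemma linf_norm_nonneg: "finite S \<Longrightarrow> x \<in> S \<Longrightarrow> 0 \<le> linf_norm S f"
  using linf_norm_ge abs_ge_zero order_trans by metis

lemma weak_norm_le:
  "(\<And>t. 0 < t \<Longrightarrow> t * fmeas w {x\<in>S. t < \<bar>g x\<bar>} powr (1/p) \<le> K) \<Longrightarrow> weak_norm S w p g \<le> K"
  unfolding weak_norm_def by (rule cSUP_least) auto

lemma weak_norm_ge:
  assumes "\<And>t. 0 < t \<Longrightarrow> t * fmeas w {x\<in>S. t < \<bar>g x\<bar>} powr (1/p) \<le> K" "0 < t"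
  shows "t * fmeas w {x\<in>S. t < \<bar>g x\<bar>} powr (1/p) \<le> weak_norm S w p g"
  unfolding weak_norm_def by (rule cSUP_upper) (use assms in \<open>auto intro: bdd_aboveI2[where M = K]\<close>)

lemma Inf_admissible_le: "0 \<le> K \<Longrightarrow> P K \<Longrightarrow> Inf {C. 0 \<le> C \<and> P C} \<le> (K::real)"
  by (rule cInf_lower) (auto simp: bdd_below_def)

lemma Inf_admissible_ge:
  "0 \<le> K \<Longrightarrow> P K \<Longrightarrow> (\<And>C. 0 \<le> C \<Longrightarrow> P C \<Longrightarrow> c \<le> C) \<Longrightarrow> c \<le> Inf {C. 0 \<le> C \<and> P C}"
  for K c :: real
  by (rule cInf_greatest) auto

abbreviation Savg :: "nat \<Rightarrow> real \<Rightarrow> real \<Rightarrow> real \<Rightarrow> (nat \<Rightarrow> real) \<Rightarrow> nat \<Rightarrow> real \<Rightarrow> real" where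
  "Savg \<tau> d m \<kappa> \<equiv> ball_avg {0..\<tau>} (Sdist d) (Smass m) \<kappa>"

lemma Smass_ge_1: "1 \<le> m \<Longrightarrow> 1 \<le> Smass m x"
  by (simp add: Smass_def)

lemma fmeas_Smass_space: "fmeas (Smass m) {0..\<tau>} = 1 + real \<tau> * m"
proof -
  have "(\<Sum>x\<in>{Suc 0..\<tau>}. Smass m x) = (\<Sum>x\<in>{Suc 0..\<tau>}. m)"
    by (rule sum.cong) (auto simp: Smass_def)
  then show ?thesis by (simp add: fmeas_def sum.atLeast_Suc_atMost Smass_def)
qed

lemma fball_Sdist:
  assumes "y \<le> \<tau>" "0 < s" "1 < d"
  shows "fball {0..\<tau>} (Sdist d) y s =
           (if s \<le> 1 then {y} else if y = 0 \<or> d < s then {0..\<tau>} else {0, y})"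
  using assms unfolding fball_def Sdist_def by auto

lemma centre_in_fball_Sdist: "y \<le> \<tau> \<Longrightarrow> 0 < s \<Longrightarrow> y \<in> fball {0..\<tau>} (Sdist d) y s"
  by (simp add: fball_def Sdist_def)

lemma ball_avg_le_centre:
  assumes "fball S \<rho> y s = {y}" "y \<in> fball S \<rho> y (\<kappa> * s)" "finite S"
    and "\<And>x. x \<in> S \<Longrightarrow> 0 \<le> w x" "0 < w y"
  shows "ball_avg S \<rho> w \<kappa> f y s \<le> \<bar>f y\<bar>"
proof -
  have "fmeas w {y} \<le> fmeas w (fball S \<rho> y (\<kappa> * s))"
    using assms by (intro fmeas_mono) (auto simp: fball_def)
  then show ?thesis
    using assms by (simp add: ball_avg_def fmeas_def divide_le_eq mult_left_mono)
qed

lemma ball_avg_le_mean: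
  assumes "fball S \<rho> y (\<kappa> * s) = S" "finite S" "\<And>x. x \<in> S \<Longrightarrow> 0 \<le> w x"
  shows "ball_avg S \<rho> w \<kappa> f y s \<le> (\<Sum>x\<in>S. \<bar>f x\<bar> * w x) / fmeas w S"
  unfolding ball_avg_def assms(1)
  by (intro divide_right_mono sum_mono2 fmeas_nonneg) (use assms in \<open>auto simp: fball_def\<close>)

definition Smean :: "nat \<Rightarrow> real \<Rightarrow> (nat \<Rightarrow> real) \<Rightarrow> real" where
  "Smean \<tau> m f = (\<Sum>x\<in>{0..\<tau>}. \<bar>f x\<bar> * Smass m x) / fmeas (Smass m) {0..\<tau>}"

definition Smajorant :: "nat \<Rightarrow> real \<Rightarrow> real \<Rightarrow> real \<Rightarrow> (nat \<Rightarrow> real) \<Rightarrow> nat \<Rightarrow> real" where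
  "Smajorant \<tau> d m \<kappa> f x = \<bar>f x\<bar> + Smean \<tau> m f + (if x = 0 then linf_norm {0..\<tau>} f else 0)
     + (if x \<noteq> 0 \<and> \<kappa> < d then \<bar>f 0\<bar> / (1 + m) else 0)"

lemma Smean_nonneg: "1 \<le> m \<Longrightarrow> 0 \<le> Smean \<tau> m f"
  unfolding Smean_def fmeas_def by (intro divide_nonneg_nonneg sum_nonneg) (auto simp: Smass_def)

lemma abs_add_Smean_le_Smajorant:
  assumes "1 \<le> m" shows "\<bar>f x\<bar> + Smean \<tau> m f \<le> Smajorant \<tau> d m \<kappa> f x"
  using assms linf_norm_nonneg[of "{0..\<tau>}" 0 f] by (simp add: Smajorant_def)

lemma pair_average_le_Smajorant:
  assumes "1 \<le> m" "x \<in> {0, y}" "y \<noteq> 0" "y \<le> \<tau>" "\<kappa> < d"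
  shows "(\<bar>f 0\<bar> + \<bar>f y\<bar> * m) / (1 + m) \<le> Smajorant \<tau> d m \<kappa> f x"
proof -
  have "(\<bar>f 0\<bar> + \<bar>f y\<bar> * m) / (1 + m) \<le> \<bar>f 0\<bar> + \<bar>f y\<bar>"
    using assms by (simp add: divide_le_eq algebra_simps add_increasing)
  moreover have "(\<bar>f 0\<bar> + \<bar>f y\<bar> * m) / (1 + m) \<le> \<bar>f y\<bar> + \<bar>f 0\<bar> / (1 + m)"
    using assms by (simp add: divide_le_eq add_divide_distrib algebra_simps)
  ultimately show ?thesis
    using assms linf_norm_ge[of "{0..\<tau>}" y f] Smean_nonneg[OF assms(1), of \<tau> f]
    by (auto simp: Smajorant_def)
qed

lemma Savg_le_Smajorant:
  assumes m: "1 \<le> m" and d: "1 < d" and \<kappa>: "1 \<le> \<kappa>"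
    and y: "y \<le> \<tau>" and s: "0 < s" and x: "x \<in> fball {0..\<tau>} (Sdist d) y s"
  shows "Savg \<tau> d m \<kappa> f y s \<le> Smajorant \<tau> d m \<kappa> f x"
proof -
  have w: "0 < Smass m z" for z using Smass_ge_1[OF m, of z] by linarith
  have "s \<le> \<kappa> * s" using \<kappa> s by simp
  then have \<kappa>s: "0 < \<kappa> * s" using s by linarith
  consider "s \<le> 1" | "1 < s" "y = 0 \<or> d < \<kappa> * s" | "1 < s" "y \<noteq> 0" "\<kappa> * s \<le> d" by linarith
  then show ?thesis
  proof cases
    case 1
    then have "x = y" using x fball_Sdist[OF y s d] by simp
    have "Savg \<tau> d m \<kappa> f y s \<le> \<bar>f y\<bar>"
      using 1 fball_Sdist[OF y s d] y \<kappa>s w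
      by (intro ball_avg_le_centre) (auto simp: fball_def Sdist_def intro: less_imp_le)
    then show ?thesis
      unfolding \<open>x = y\<close>
      using abs_add_Smean_le_Smajorant[OF m, of f y \<tau> d \<kappa>] Smean_nonneg[OF m, of \<tau> f] by linarith
  next
    case 2
    then have "fball {0..\<tau>} (Sdist d) y (\<kappa> * s) = {0..\<tau>}"
      using fball_Sdist[OF y \<kappa>s d] \<open>s \<le> \<kappa> * s\<close> by auto
    then have "Savg \<tau> d m \<kappa> f y s \<le> Smean \<tau> m f"
      unfolding Smean_def using w by (intro ball_avg_le_mean) (auto intro: less_imp_le)
    then show ?thesis
      using abs_add_Smean_le_Smajorant[OF m, of f x \<tau> d \<kappa>] abs_ge_zero[of "f x"] by linarith
  next
    case 3
    have "\<kappa> * 1 < \<kappa> * s" using 3 \<kappa> by (intro mult_strict_left_mono) auto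
    then have "\<kappa> < d" using 3 by linarith
    have "\<not> d < s" "\<not> \<kappa> * s \<le> 1" using 3 \<open>s \<le> \<kappa> * s\<close> by linarith+
    then have "fball {0..\<tau>} (Sdist d) y s = {0, y}" "fball {0..\<tau>} (Sdist d) y (\<kappa> * s) = {0, y}"
      using 3 fball_Sdist[OF y s d] fball_Sdist[OF y \<kappa>s d] by auto
    then have "Savg \<tau> d m \<kappa> f y s = (\<bar>f 0\<bar> + \<bar>f y\<bar> * m) / (1 + m)"
      using 3 by (simp add: ball_avg_def fmeas_def Smass_def)
    moreover have "x \<in> {0, y}" using x \<open>fball {0..\<tau>} (Sdist d) y s = {0, y}\<close> by simp
    ultimately show ?thesis using pair_average_le_Smajorant[OF m] 3 \<open>\<kappa> < d\<close> y by simp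
  qed
qed

lemma cmax_le_Smajorant:
  assumes "1 \<le> m" "1 < d" "1 \<le> \<kappa>" "x \<le> \<tau>"
  shows "cmax {0..\<tau>} (Sdist d) (Smass m) \<kappa> f x \<le> Smajorant \<tau> d m \<kappa> f x"
  unfolding cmax_def
proof (rule cSUP_least)
  fix s :: real assume "s \<in> {0<..}"
  then show "Savg \<tau> d m \<kappa> f x s \<le> Smajorant \<tau> d m \<kappa> f x"
    using assms by (intro Savg_le_Smajorant centre_in_fball_Sdist) auto
qed simp

lemma Savg_le_cmax:
  assumes "1 \<le> m" "1 < d" "1 \<le> \<kappa>" "x \<le> \<tau>" "0 < s"
  shows "Savg \<tau> d m \<kappa> f x s \<le> cmax {0..\<tau>} (Sdist d) (Smass m) \<kappa> f x"
  unfolding cmax_def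
proof (rule cSUP_upper)
  show "bdd_above ((Savg \<tau> d m \<kappa> f x) ` {0<..})"
    using assms by (intro bdd_aboveI2[where M = "Smajorant \<tau> d m \<kappa> f x"]
        Savg_le_Smajorant centre_in_fball_Sdist) auto
qed (use assms in simp)

lemma umax_le_Smajorant:
  assumes "1 \<le> m" "1 < d" "1 \<le> \<kappa>" "x \<le> \<tau>"
  shows "umax {0..\<tau>} (Sdist d) (Smass m) \<kappa> f x \<le> Smajorant \<tau> d m \<kappa> f x"
  unfolding umax_def
proof (rule cSup_least)
  show "{Savg \<tau> d m \<kappa> f y s |y s. y \<in> {0..\<tau>} \<and> 0 < s \<and> x \<in> fball {0..\<tau>} (Sdist d) y s} \<noteq> {}"
    using assms centre_in_fball_Sdist[of x \<tau> 1 d] by (auto intro!: exI[of _ x] exI[of _ "1::real"])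
qed (use assms Savg_le_Smajorant in auto)

lemma Savg_le_umax:
  assumes "1 \<le> m" "1 < d" "1 \<le> \<kappa>" "x \<le> \<tau>" "0 < s"
  shows "Savg \<tau> d m \<kappa> f x s \<le> umax {0..\<tau>} (Sdist d) (Smass m) \<kappa> f x"
  unfolding umax_def
proof (rule cSup_upper)
  show "bdd_above {Savg \<tau> d m \<kappa> f y s |y s. y \<in> {0..\<tau>} \<and> 0 < s \<and> x \<in> fball {0..\<tau>} (Sdist d) y s}"
    using assms Savg_le_Smajorant by (intro bdd_aboveI[where M = "Smajorant \<tau> d m \<kappa> f x"]) auto
qed (use assms centre_in_fball_Sdist[of x \<tau> s d] in \<open>auto intro!: exI[of _ x] exI[of _ s]\<close>)

lemma level_set_subset_Smajorant_pieces:
  assumes "\<And>x. x \<le> \<tau> \<Longrightarrow> \<bar>g x\<bar> \<le> Smajorant \<tau> d m \<kappa> f x"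
  shows "{x\<in>{0..\<tau>}. 4 * c < \<bar>g x\<bar>} \<subseteq>
           {x\<in>{0..\<tau>}. c < \<bar>f x\<bar>} \<union> {x\<in>{0..\<tau>}. c < Smean \<tau> m f}
           \<union> {x\<in>{0..\<tau>}. x = 0 \<and> c < linf_norm {0..\<tau>} f}
           \<union> {x\<in>{0..\<tau>}. x \<noteq> 0 \<and> \<kappa> < d \<and> c < \<bar>f 0\<bar> / (1 + m)}"
proof
  fix x assume "x \<in> {x\<in>{0..\<tau>}. 4 * c < \<bar>g x\<bar>}"
  then have "x \<le> \<tau>" "4 * c < Smajorant \<tau> d m \<kappa> f x" using assms by force+
  then show "x \<in> {x\<in>{0..\<tau>}. c < \<bar>f x\<bar>} \<union> {x\<in>{0..\<tau>}. c < Smean \<tau> m f}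
           \<union> {x\<in>{0..\<tau>}. x = 0 \<and> c < linf_norm {0..\<tau>} f}
           \<union> {x\<in>{0..\<tau>}. x \<noteq> 0 \<and> \<kappa> < d \<and> c < \<bar>f 0\<bar> / (1 + m)}"
    unfolding Smajorant_def by (auto split: if_splits)
qed

lemma fmeas_mean_level_le:
  assumes "1 \<le> m" "1 \<le> r" "0 < c"
  shows "fmeas (Smass m) {x\<in>{0..\<tau>}. c < Smean \<tau> m f}
           \<le> (2/c) powr r * (\<Sum>x\<in>{0..\<tau>}. \<bar>f x\<bar> powr r * Smass m x)"
proof (cases "c < Smean \<tau> m f")
  case True
  have "0 < fmeas (Smass m) {0..\<tau>}" using assms by (simp add: fmeas_Smass_space add_pos_nonneg)
  then have "2 * (c/2) * fmeas (Smass m) {0..\<tau>} < (\<Sum>x\<in>{0..\<tau>}. \<bar>f x\<bar> * Smass m x)"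
    using True by (simp add: Smean_def pos_less_divide_eq)
  then have "fmeas (Smass m) {0..\<tau>} \<le> (1/(c/2)) powr r * (\<Sum>x\<in>{0..\<tau>}. \<bar>f x\<bar> powr r * Smass m x)"
    using assms by (intro fmeas_le_of_average_gt) (auto simp: Smass_def)
  moreover have "{x\<in>{0..\<tau>}. c < Smean \<tau> m f} = {0..\<tau>}" using True by auto
  ultimately show ?thesis by simp
qed (use assms in \<open>auto simp: fmeas_def Smass_def intro!: mult_nonneg_nonneg sum_nonneg\<close>)

lemma fmeas_linf_level_le:
  assumes "1 \<le> m" "0 < c" "0 < r"
  shows "fmeas (Smass m) {x\<in>{0..\<tau>}. x = 0 \<and> c < linf_norm {0..\<tau>} f}
           \<le> (1/c) powr r * (\<Sum>x\<in>{0..\<tau>}. \<bar>f x\<bar> powr r * Smass m x)"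
proof (cases "c < linf_norm {0..\<tau>} f")
  case True
  then obtain z where z: "z \<le> \<tau>" "c < \<bar>f z\<bar>"
    unfolding linf_norm_def by (subst (asm) Max_gr_iff) auto
  have "{x\<in>{0..\<tau>}. x = 0 \<and> c < linf_norm {0..\<tau>} f} = {0}" using True by auto
  then have "fmeas (Smass m) {x\<in>{0..\<tau>}. x = 0 \<and> c < linf_norm {0..\<tau>} f} = 1"
    by (simp add: fmeas_def Smass_def)
  also have "\<dots> \<le> fmeas (Smass m) {z}" using Smass_ge_1[OF assms(1)] by (simp add: fmeas_def)
  also have "\<dots> \<le> fmeas (Smass m) {x\<in>{0..\<tau>}. c < \<bar>f x\<bar>}"
    using z assms by (intro fmeas_mono) (auto simp: Smass_def)
  also have "\<dots> \<le> (1/c) powr r * (\<Sum>x\<in>{0..\<tau>}. \<bar>f x\<bar> powr r * Smass m x)"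
    using assms by (intro fmeas_level_set_le) (auto simp: Smass_def)
  finally show ?thesis .
qed (use assms in \<open>auto simp: fmeas_def Smass_def intro!: mult_nonneg_nonneg sum_nonneg\<close>)

lemma fmeas_pair_level_le:
  assumes "1 \<le> m" "1 \<le> r" "0 < c"
  shows "fmeas (Smass m) {x\<in>{0..\<tau>}. x \<noteq> 0 \<and> \<kappa> < d \<and> c < \<bar>f 0\<bar> / (1 + m)}
           \<le> (1/c) powr r * (\<Sum>x\<in>{0..\<tau>}. \<bar>f x\<bar> powr r * Smass m x)
              * (if \<kappa> < d then real \<tau> * m powr (1 - r) else 0)"
proof (cases "\<kappa> < d \<and> c < \<bar>f 0\<bar> / (1 + m)")
  case True
  let ?N = "\<Sum>x\<in>{0..\<tau>}. \<bar>f x\<bar> powr r * Smass m x"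
  have "c * m \<le> c * (1 + m)" using assms by simp
  also have "\<dots> < \<bar>f 0\<bar>" using True assms by (simp add: pos_less_divide_eq mult.commute)
  finally have "1 \<le> \<bar>f 0\<bar> / (c * m)" using assms by (simp add: le_divide_eq)
  then have "1 \<le> (\<bar>f 0\<bar> / (c * m)) powr r" using assms by (intro ge_one_powr_ge_zero) auto
  also have "\<dots> = (1/c) powr r * \<bar>f 0\<bar> powr r * m powr (1 - r) / m"
    using assms by (simp add: powr_divide powr_mult powr_diff)
  also have "\<bar>f 0\<bar> powr r \<le> ?N"
    using member_le_sum[of 0 "{0..\<tau>}" "\<lambda>x. \<bar>f x\<bar> powr r * Smass m x"] assms
    by (simp add: Smass_def)
  finally have "m \<le> (1/c) powr r * ?N * m powr (1 - r)"
    using assms by (simp add: divide_le_eq mult_left_mono mult_right_mono)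
  then have "real \<tau> * m \<le> real \<tau> * ((1/c) powr r * ?N * m powr (1 - r))"
    by (intro mult_left_mono) auto
  moreover have "{x\<in>{0..\<tau>}. x \<noteq> 0 \<and> \<kappa> < d \<and> c < \<bar>f 0\<bar> / (1 + m)} = {Suc 0..\<tau>}"
    using True by auto
  ultimately show ?thesis
    using True by (simp add: fmeas_def Smass_def mult_ac)
qed (use assms in \<open>auto simp: fmeas_def Smass_def intro!: mult_nonneg_nonneg sum_nonneg\<close>)

lemma fmeas_level_set_Smajorant_le:
  assumes m: "1 \<le> m" and r: "1 \<le> r" and c: "0 < c"
    and g: "\<And>x. x \<le> \<tau> \<Longrightarrow> \<bar>g x\<bar> \<le> Smajorant \<tau> d m \<kappa> f x"
  shows "fmeas (Smass m) {x\<in>{0..\<tau>}. 4 * c < \<bar>g x\<bar>}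
           \<le> (2/c) powr r * (\<Sum>x\<in>{0..\<tau>}. \<bar>f x\<bar> powr r * Smass m x)
              * (3 + (if \<kappa> < d then real \<tau> * m powr (1 - r) else 0))"
proof -
  let ?\<mu> = "fmeas (Smass m)" and ?N = "\<Sum>x\<in>{0..\<tau>}. \<bar>f x\<bar> powr r * Smass m x"
    and ?Y = "if \<kappa> < d then real \<tau> * m powr (1 - r) else 0"
  define A where "A = {x\<in>{0..\<tau>}. c < \<bar>f x\<bar>}"
  define B where "B = {x\<in>{0..\<tau>}. c < Smean \<tau> m f}"
  define C where "C = {x\<in>{0..\<tau>}. x = 0 \<and> c < linf_norm {0..\<tau>} f}"
  define D where "D = {x\<in>{0..\<tau>}. x \<noteq> 0 \<and> \<kappa> < d \<and> c < \<bar>f 0\<bar> / (1 + m)}"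
  have w: "\<And>x. 0 \<le> Smass m x" using m by (simp add: Smass_def)
  have N: "0 \<le> ?N" using w by (intro sum_nonneg mult_nonneg_nonneg) auto
  have "?\<mu> {x\<in>{0..\<tau>}. 4 * c < \<bar>g x\<bar>} \<le> ?\<mu> (A \<union> B \<union> C \<union> D)"
    unfolding A_def B_def C_def D_def
    using level_set_subset_Smajorant_pieces[OF g] w by (intro fmeas_mono) auto
  also have "\<dots> \<le> ?\<mu> A + ?\<mu> B + ?\<mu> C + ?\<mu> D"
  proof -
    have fin: "finite A" "finite B" "finite C" "finite D" by (simp_all add: A_def B_def C_def D_def)
    have "?\<mu> (A \<union> B \<union> C \<union> D) \<le> ?\<mu> (A \<union> B \<union> C) + ?\<mu> D"
      using fin w by (intro fmeas_Un_le) auto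
    moreover have "?\<mu> (A \<union> B \<union> C) \<le> ?\<mu> (A \<union> B) + ?\<mu> C"
      using fin w by (intro fmeas_Un_le) auto
    moreover have "?\<mu> (A \<union> B) \<le> ?\<mu> A + ?\<mu> B"
      using fin w by (intro fmeas_Un_le) auto
    ultimately show ?thesis by linarith
  qed
  also have "\<dots> \<le> (1/c) powr r * ?N + (2/c) powr r * ?N + (1/c) powr r * ?N + (1/c) powr r * ?N * ?Y"
    unfolding A_def B_def C_def D_def using m r c w
    by (intro add_mono fmeas_level_set_le fmeas_mean_level_le fmeas_linf_level_le fmeas_pair_level_le) auto
  also have "\<dots> \<le> (2/c) powr r * ?N * (3 + ?Y)"
  proof -
    have "(1/c) powr r \<le> (2/c) powr r" using c r by (intro powr_mono2) (auto simp: divide_right_mono)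
    moreover have "0 \<le> ?Y" by simp
    ultimately show ?thesis using N by (simp add: algebra_simps mult_right_mono mult_left_mono add_mono)
  qed
  finally show ?thesis .
qed

lemma root_le_Sbound:
  assumes r: "1 \<le> r" and m: "1 \<le> m"
  shows "(3 + (if \<kappa> < d then real \<tau> * m powr (1 - r) else 0)) powr (1/r)
           \<le> 4 * Sbound \<tau> d m \<kappa> (ereal r)"
proof (cases "\<kappa> < d")
  case False
  have "3 powr (1/r) \<le> (3::real) powr 1" using r by (intro powr_mono) auto
  then show ?thesis using False by (simp add: Sbound_def)
next
  case True
  define Y where "Y = real \<tau> * m powr (1 - r)"
  have Y: "0 \<le> Y" by (simp add: Y_def)
  have "(3 + Y) powr (1/r) \<le> (4 * max 1 Y) powr (1/r)" using Y r by (intro powr_mono2) auto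
  also have "\<dots> = 4 powr (1/r) * max 1 Y powr (1/r)" using Y by (simp add: powr_mult)
  also have "\<dots> \<le> 4 * max 1 (Y powr (1/r))"
    using powr_mono[of "1/r" 1 4] r by (intro mult_mono) (auto simp: max_def)
  also have "Y powr (1/r) = real \<tau> powr (1/r) * m powr (1/r - 1)"
    using m r by (simp add: Y_def powr_mult powr_powr diff_divide_distrib)
  finally show ?thesis using True by (simp add: Sbound_def Y_def)
qed

lemma weak_level_le_Sbound:
  assumes m: "1 \<le> m" and r: "1 \<le> r" and t: "0 < t"
    and g: "\<And>x. x \<le> \<tau> \<Longrightarrow> \<bar>g x\<bar> \<le> Smajorant \<tau> d m \<kappa> f x"
  shows "t * fmeas (Smass m) {x\<in>{0..\<tau>}. t < \<bar>g x\<bar>} powr (1/r)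
           \<le> 32 * Sbound \<tau> d m \<kappa> (ereal r) * lp_norm {0..\<tau>} (Smass m) r f"
proof -
  let ?\<mu> = "fmeas (Smass m) {x\<in>{0..\<tau>}. t < \<bar>g x\<bar>}" and ?N = "\<Sum>x\<in>{0..\<tau>}. \<bar>f x\<bar> powr r * Smass m x"
    and ?Y = "if \<kappa> < d then real \<tau> * m powr (1 - r) else 0"
  have "?\<mu> \<le> (8/t) powr r * ?N * (3 + ?Y)"
    using fmeas_level_set_Smajorant_le[OF m r _ g, of "t/4"] t by simp
  moreover have "0 \<le> ?\<mu>" using m by (intro fmeas_nonneg) (simp add: Smass_def)
  ultimately have "?\<mu> powr (1/r) \<le> ((8/t) powr r * ?N * (3 + ?Y)) powr (1/r)"
    using r by (intro powr_mono2) auto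
  also have "\<dots> = 8/t * ?N powr (1/r) * (3 + ?Y) powr (1/r)"
    using t r m by (simp add: powr_mult powr_powr sum_nonneg Smass_def)
  also have "\<dots> \<le> 8/t * lp_norm {0..\<tau>} (Smass m) r f * (4 * Sbound \<tau> d m \<kappa> (ereal r))"
    using root_le_Sbound[OF r m, of \<kappa> d \<tau>] t unfolding lp_norm_def by (intro mult_left_mono) auto
  finally show ?thesis using t by (simp add: field_simps)
qed

lemma lp_norm_indicator_0: "lp_norm {0..\<tau>} (Smass m) r (indicator {0}) = 1"
proof -
  have "(\<Sum>x\<in>{Suc 0..\<tau>}. \<bar>indicator {0} x\<bar> powr r * Smass m x) = (0::real)"
    by (intro sum.neutral) (auto simp: indicator_def)
  then show ?thesis by (simp add: lp_norm_def sum.atLeast_Suc_atMost Smass_def)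
qed

lemma linf_norm_indicator_0: "linf_norm {0..\<tau>::nat} (indicator {0}) = 1"
proof (rule antisym)
  show "linf_norm {0..\<tau>} (indicator {0}) \<le> 1"
    unfolding linf_norm_def by (rule Max.boundedI) (auto simp: indicator_def)
  show "1 \<le> linf_norm {0..\<tau>} (indicator {0})"
    using linf_norm_ge[of "{0..\<tau>}" 0 "indicator {0}"] by simp
qed

lemma Savg_indicator_0_centre:
  assumes "1 < d" "1 \<le> \<kappa>"
  shows "Savg \<tau> d m \<kappa> (indicator {0}) 0 (1/\<kappa>) = 1"
proof -
  have "fball {0..\<tau>} (Sdist d) 0 (1/\<kappa>) = {0}" "fball {0..\<tau>} (Sdist d) 0 (\<kappa> * (1/\<kappa>)) = {0}"
    using assms fball_Sdist[of 0 \<tau> "1/\<kappa>" d] fball_Sdist[of 0 \<tau> 1 d] by auto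
  then show ?thesis by (simp add: ball_avg_def fmeas_def Smass_def indicator_def)
qed

lemma Savg_indicator_0_pair:
  assumes "1 < d" "1 \<le> \<kappa>" "\<kappa> < d" "x \<le> \<tau>" "x \<noteq> 0"
  shows "Savg \<tau> d m \<kappa> (indicator {0}) x (d/\<kappa>) = 1 / (1 + m)"
proof -
  have "1 < d/\<kappa>" "d/\<kappa> \<le> d" using assms by (simp_all add: divide_simps)
  then have "fball {0..\<tau>} (Sdist d) x (d/\<kappa>) = {0, x}" "fball {0..\<tau>} (Sdist d) x (\<kappa> * (d/\<kappa>)) = {0, x}"
    using assms fball_Sdist[of x \<tau> "d/\<kappa>" d] fball_Sdist[of x \<tau> d d] by auto
  then show ?thesis using assms by (simp add: ball_avg_def fmeas_def Smass_def indicator_def)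
qed

lemma Sbound_le_weak_norm_indicator_0:
  assumes m: "1 \<le> m" and d: "1 < d" and \<kappa>: "1 \<le> \<kappa>" and r: "1 \<le> r"
    and centred: "\<And>x s. x \<le> \<tau> \<Longrightarrow> 0 < s \<Longrightarrow> Savg \<tau> d m \<kappa> (indicator {0}) x s \<le> g x"
    and bdd: "\<And>t. 0 < t \<Longrightarrow> t * fmeas (Smass m) {x\<in>{0..\<tau>}. t < \<bar>g x\<bar>} powr (1/r) \<le> K"
  shows "Sbound \<tau> d m \<kappa> (ereal r) \<le> 4 * weak_norm {0..\<tau>} (Smass m) r g"
proof -
  let ?W = "weak_norm {0..\<tau>} (Smass m) r g"
  have level: "t * fmeas (Smass m) {x\<in>{0..\<tau>}. t < \<bar>g x\<bar>} powr (1/r) \<le> ?W" if "0 < t" for t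
    using weak_norm_ge[OF bdd that] .
  have g0: "1 \<le> g 0"
    using centred[of 0 "1/\<kappa>"] Savg_indicator_0_centre[OF d \<kappa>] \<kappa> by simp
  have "1 \<le> fmeas (Smass m) {x\<in>{0..\<tau>}. 1/2 < \<bar>g x\<bar>}"
    using fmeas_mono[of "{x\<in>{0..\<tau>}. 1/2 < \<bar>g x\<bar>}" "{0}" "Smass m"] g0 m
    by (simp add: fmeas_def Smass_def)
  then have "1/2 \<le> ?W" using level[of "1/2"] r ge_one_powr_ge_zero[of _ "1/r"] by force
  moreover have "real \<tau> powr (1/r) * m powr (1/r - 1) \<le> 4 * ?W" if "\<kappa> < d"
  proof -
    define t where "t = 1 / (2 * (1 + m))"
    have t: "0 < t" "t < 1/(1 + m)" "1/m \<le> 4 * t" "t < 1" using m by (simp_all add: t_def field_simps)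
    have "t < \<bar>g x\<bar>" if "x \<le> \<tau>" for x
      using g0 t centred[OF that, of "d/\<kappa>"] Savg_indicator_0_pair[OF d \<kappa> \<open>\<kappa> < d\<close> that] d \<kappa>
      by (cases "x = 0") auto
    then have "{x\<in>{0..\<tau>}. t < \<bar>g x\<bar>} = {0..\<tau>}" by auto
    then have "t * fmeas (Smass m) {0..\<tau>} powr (1/r) \<le> ?W" using level[OF t(1)] by simp
    moreover have "(real \<tau> * m) powr (1/r) \<le> fmeas (Smass m) {0..\<tau>} powr (1/r)"
      using m r by (intro powr_mono2) (auto simp: fmeas_Smass_space)
    ultimately have "t * (real \<tau> * m) powr (1/r) \<le> ?W"
      using t(1) by (meson order_trans mult_left_mono less_imp_le)
    moreover have "real \<tau> powr (1/r) * m powr (1/r - 1) = (real \<tau> * m) powr (1/r) * (1/m)"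
      using m by (simp add: powr_mult powr_diff)
    moreover have "(real \<tau> * m) powr (1/r) * (1/m) \<le> (real \<tau> * m) powr (1/r) * (4 * t)"
      using t by (intro mult_left_mono) auto
    ultimately show ?thesis by (simp add: mult_ac)
  qed
  ultimately show ?thesis by (auto simp: Sbound_def)
qed

lemma Smean_le_linf_norm:
  assumes "1 \<le> m" shows "Smean \<tau> m f \<le> linf_norm {0..\<tau>} f"
proof -
  have "(\<Sum>x\<in>{0..\<tau>}. \<bar>f x\<bar> * Smass m x) \<le> (\<Sum>x\<in>{0..\<tau>}. linf_norm {0..\<tau>} f * Smass m x)"
    using assms linf_norm_ge[of "{0..\<tau>}" _ f] by (intro sum_mono mult_right_mono) (auto simp: Smass_def)
  also have "\<dots> = linf_norm {0..\<tau>} f * fmeas (Smass m) {0..\<tau>}"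
    by (simp add: fmeas_def sum_distrib_left)
  finally show ?thesis
    using assms by (simp add: Smean_def pos_divide_le_eq fmeas_Smass_space add_pos_nonneg)
qed

lemma Smajorant_le_linf_norm:
  assumes "1 \<le> m" "x \<le> \<tau>"
  shows "Smajorant \<tau> d m \<kappa> f x \<le> 3 * linf_norm {0..\<tau>} f"
proof -
  have "\<bar>f 0\<bar> / (1 + m) \<le> \<bar>f 0\<bar> / 1" using assms by (intro divide_left_mono) auto
  then show ?thesis
    using assms Smean_le_linf_norm[OF assms(1), of \<tau> f] linf_norm_ge[of "{0..\<tau>}" x f]
      linf_norm_ge[of "{0..\<tau>}" 0 f] linf_norm_nonneg[of "{0..\<tau>}" 0 f]
    by (auto simp: Smajorant_def)
qed

lemma Sbound_ge_1: "1 \<le> Sbound \<tau> d m \<kappa> p"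
  by (simp add: Sbound_def)

lemma nonneg_of_Savg_le:
  "1 \<le> m \<Longrightarrow> (\<And>s. 0 < s \<Longrightarrow> Savg \<tau> d m \<kappa> f x s \<le> g) \<Longrightarrow> 0 \<le> g"
  using ball_avg_nonneg[of "{0..\<tau>}" "Smass m" "Sdist d" \<kappa> f x 1] Smass_ge_1[of m]
  by (smt (verit) zero_less_one)

lemma best_const_weak_Sbound:
  fixes T :: "(nat \<Rightarrow> real) \<Rightarrow> nat \<Rightarrow> real"
  assumes m: "1 \<le> m" and d: "1 < d" and \<kappa>: "1 \<le> \<kappa>" and r: "1 \<le> r"
    and centred: "\<And>f x s. x \<le> \<tau> \<Longrightarrow> 0 < s \<Longrightarrow> Savg \<tau> d m \<kappa> f x s \<le> T f x"
    and major: "\<And>f x. x \<le> \<tau> \<Longrightarrow> T f x \<le> Smajorant \<tau> d m \<kappa> f x"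
  shows "best_const {0..\<tau>} (Smass m) T (ereal r) \<le> 32 * Sbound \<tau> d m \<kappa> (ereal r)"
    and "Sbound \<tau> d m \<kappa> (ereal r) \<le> 4 * best_const {0..\<tau>} (Smass m) T (ereal r)"
proof -
  let ?K = "32 * Sbound \<tau> d m \<kappa> (ereal r)"
  have "\<bar>T f x\<bar> \<le> Smajorant \<tau> d m \<kappa> f x" if "x \<le> \<tau>" for f x
    using nonneg_of_Savg_le[OF m centred[OF that]] major[OF that] by simp
  then have level: "t * fmeas (Smass m) {x\<in>{0..\<tau>}. t < \<bar>T f x\<bar>} powr (1/r)
                      \<le> ?K * lp_norm {0..\<tau>} (Smass m) r f" if "0 < t" for f t
    using weak_level_le_Sbound[OF m r that] by blast
  have admissible: "\<forall>f. weak_norm {0..\<tau>} (Smass m) r (T f) \<le> ?K * lp_norm {0..\<tau>} (Smass m) r f"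
    using level by (blast intro: weak_norm_le)
  have K: "0 \<le> ?K" using Sbound_ge_1[of \<tau> d m \<kappa> "ereal r"] by simp
  show "best_const {0..\<tau>} (Smass m) T (ereal r) \<le> ?K"
    unfolding best_const_def using K admissible by (simp add: Inf_admissible_le)
  have lower: "Sbound \<tau> d m \<kappa> (ereal r) / 4 \<le> C"
    if "\<forall>f. weak_norm {0..\<tau>} (Smass m) r (T f) \<le> C * lp_norm {0..\<tau>} (Smass m) r f" for C
    using that[rule_format, of "indicator {0}"] lp_norm_indicator_0[of \<tau> m r]
      Sbound_le_weak_norm_indicator_0[OF m d \<kappa> r centred level] by simp
  have "Sbound \<tau> d m \<kappa> (ereal r) / 4 \<le> Inf {C. 0 \<le> C \<and>
          (\<forall>f. weak_norm {0..\<tau>} (Smass m) r (T f) \<le> C * lp_norm {0..\<tau>} (Smass m) r f)}"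
    using K admissible lower by (intro Inf_admissible_ge[where K = ?K]) auto
  then show "Sbound \<tau> d m \<kappa> (ereal r) \<le> 4 * best_const {0..\<tau>} (Smass m) T (ereal r)"
    by (simp add: best_const_def)
qed

lemma best_const_Linf_Sbound:
  fixes T :: "(nat \<Rightarrow> real) \<Rightarrow> nat \<Rightarrow> real"
  assumes m: "1 \<le> m" and d: "1 < d" and \<kappa>: "1 \<le> \<kappa>"
    and centred: "\<And>f x s. x \<le> \<tau> \<Longrightarrow> 0 < s \<Longrightarrow> Savg \<tau> d m \<kappa> f x s \<le> T f x"
    and major: "\<And>f x. x \<le> \<tau> \<Longrightarrow> T f x \<le> Smajorant \<tau> d m \<kappa> f x"
  shows "best_const {0..\<tau>} (Smass m) T \<infinity> \<le> 3 * Sbound \<tau> d m \<kappa> \<infinity>"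
    and "Sbound \<tau> d m \<kappa> \<infinity> \<le> best_const {0..\<tau>} (Smass m) T \<infinity>"
proof -
  have "\<bar>T f x\<bar> \<le> 3 * linf_norm {0..\<tau>} f" if "x \<le> \<tau>" for f x
    using nonneg_of_Savg_le[OF m centred[OF that]] major[OF that] Smajorant_le_linf_norm[OF m that]
    by (metis abs_of_nonneg order_trans)
  then have admissible: "\<forall>f. linf_norm {0..\<tau>} (T f) \<le> 3 * linf_norm {0..\<tau>} f"
    by (auto simp: linf_norm_def[of _ "T _"] intro: Max.boundedI)
  show "best_const {0..\<tau>} (Smass m) T \<infinity> \<le> 3 * Sbound \<tau> d m \<kappa> \<infinity>"
    unfolding best_const_def Sbound_def using admissible by (simp add: Inf_admissible_le)
  have "1 \<le> T (indicator {0}) 0"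
    using centred[of 0 "1/\<kappa>" "indicator {0}"] Savg_indicator_0_centre[OF d \<kappa>] \<kappa> by simp
  then have "1 \<le> C" if "\<forall>f. linf_norm {0..\<tau>} (T f) \<le> C * linf_norm {0..\<tau>} f" for C
    using that[rule_format, of "indicator {0}"] linf_norm_indicator_0[of \<tau>]
      linf_norm_ge[of "{0..\<tau>}" 0 "T (indicator {0})"] by simp
  then show "Sbound \<tau> d m \<kappa> \<infinity> \<le> best_const {0..\<tau>} (Smass m) T \<infinity>"
    unfolding best_const_def Sbound_def using admissible
    by (simp add: Inf_admissible_ge[where K = 3])
qed

lemma best_const_comparable_Sbound:
  fixes T :: "(nat \<Rightarrow> real) \<Rightarrow> nat \<Rightarrow> real"
  assumes p: "1 \<le> p" and m: "1 \<le> m" and d: "1 < d" and \<kappa>: "1 \<le> \<kappa>"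
    and centred: "\<And>f x s. x \<le> \<tau> \<Longrightarrow> 0 < s \<Longrightarrow> Savg \<tau> d m \<kappa> f x s \<le> T f x"
    and major: "\<And>f x. x \<le> \<tau> \<Longrightarrow> T f x \<le> Smajorant \<tau> d m \<kappa> f x"
  shows "best_const {0..\<tau>} (Smass m) T p \<le> 32 * Sbound \<tau> d m \<kappa> p
         \<and> Sbound \<tau> d m \<kappa> p \<le> 32 * best_const {0..\<tau>} (Smass m) T p"
proof (cases p)
  case (real r)
  with p have "1 \<le> r" by simp
  from best_const_weak_Sbound[OF m d \<kappa> this centred major] Sbound_ge_1[of \<tau> d m \<kappa> p]
  show ?thesis unfolding real by linarith
next
  case PInf
  from best_const_Linf_Sbound[OF m d \<kappa> centred major] Sbound_ge_1[of \<tau> d m \<kappa> p]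
  show ?thesis unfolding PInf by linarith
qed (use p in simp)

theorem lemma3p3p2:
  fixes p :: ereal
  assumes "1 \<le> p"
  shows "\<exists>C>0. \<forall>(\<tau>::nat) (d::real) (m::real) (\<kappa>::real).
           1 \<le> \<tau> \<longrightarrow> 1 < d \<longrightarrow> d \<le> 2 \<longrightarrow> 1 \<le> m \<longrightarrow> 1 \<le> \<kappa> \<longrightarrow>
             Sc \<tau> d m \<kappa> p \<le> C * Sbound \<tau> d m \<kappa> p \<and> Sbound \<tau> d m \<kappa> p \<le> C * Sc \<tau> d m \<kappa> p \<and>
             Scc \<tau> d m \<kappa> p \<le> C * Sbound \<tau> d m \<kappa> p \<and> Sbound \<tau> d m \<kappa> p \<le> C * Scc \<tau> d m \<kappa> p"
proof (intro exI[of _ 32] conjI allI impI)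
  fix \<tau> :: nat and d m \<kappa> :: real
  assume "1 < d" "1 \<le> m" "1 \<le> \<kappa>"
  note uncentred = best_const_comparable_Sbound[OF assms \<open>1 \<le> m\<close> \<open>1 < d\<close> \<open>1 \<le> \<kappa>\<close>
      Savg_le_umax umax_le_Smajorant]
    and centred = best_const_comparable_Sbound[OF assms \<open>1 \<le> m\<close> \<open>1 < d\<close> \<open>1 \<le> \<kappa>\<close>
      Savg_le_cmax cmax_le_Smajorant]
  show "Sc \<tau> d m \<kappa> p \<le> 32 * Sbound \<tau> d m \<kappa> p" "Sbound \<tau> d m \<kappa> p \<le> 32 * Sc \<tau> d m \<kappa> p"
    using uncentred \<open>1 < d\<close> \<open>1 \<le> m\<close> \<open>1 \<le> \<kappa>\<close> by (simp_all add: Sc_def)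
  show "Scc \<tau> d m \<kappa> p \<le> 32 * Sbound \<tau> d m \<kappa> p" "Sbound \<tau> d m \<kappa> p \<le> 32 * Scc \<tau> d m \<kappa> p"
    using centred \<open>1 < d\<close> \<open>1 \<le> m\<close> \<open>1 \<le> \<kappa>\<close> by (simp_all add: Scc_def)
qed simp

end
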